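(* For every integer $n>16$, the generalized Petersen graph $GP(n,3)$ is not $1$-distance-balanced.
   Context: For a connected graph $G$ and $x,y\in V(G)$, $d_G(x,y)$ denotes the distance. Let $W_{xy}=\{w\in V(G): d_G(w,x)<d_G(w,y)\}$. $G$ is called $\ell$-distance-balanced if $|W_{xy}|=|W_{yx}|$ for every pair $x,y\in V(G)$ with $d_G(x,y)=\ell$. For integers $n\ge 3$ and $1\le k<n/2$, the generalized Petersen graph $GP(n,k)$ has vertex set $\{u_i: i\in\mathbb{Z}_n\}\cup\{v_i: i\in\mathbb{Z}_n\}$ and edge set $\{u_iu_{i+1}: i\in\mathbb{Z}_n\}\cup\{v_iv_{i+k}: i\in\mathbb{Z}_n\}\cup\{u_iv_i: i\in\mathbb{Z}_n\}$. *)

theory Defs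
  imports Main
begin

datatype gp_vertex = U nat | V nat

definition gp_verts :: "nat \<Rightarrow> gp_vertex set" where
  "gp_verts n = U ` {..<n} \<union> V ` {..<n}"

definition gp_adj :: "nat \<Rightarrow> nat \<Rightarrow> gp_vertex \<Rightarrow> gp_vertex \<Rightarrow> bool" where
  "gp_adj n k x y \<longleftrightarrow> x \<in> gp_verts n \<and> y \<in> gp_verts n \<and>
     (\<exists>i<n. ({x, y} = {U i, U ((i + 1) mod n)}) \<or>
             ({x, y} = {V i, V ((i + k) mod n)}) \<or>
             ({x, y} = {U i, V i}))"

fun walk :: "'a set \<Rightarrow> ('a \<Rightarrow> 'a \<Rightarrow> bool) \<Rightarrow> nat \<Rightarrow> 'a \<Rightarrow> 'a \<Rightarrow> bool" where
  "walk Vs E 0 x y \<longleftrightarrow> x \<in> Vs \<and> x = y"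
| "walk Vs E (Suc m) x y \<longleftrightarrow> (\<exists>z\<in>Vs. E x z \<and> walk Vs E m z y)"

(* graph distance d_G(x,y): length of a shortest walk (used only on connected graphs) *)
definition gdist :: "'a set \<Rightarrow> ('a \<Rightarrow> 'a \<Rightarrow> bool) \<Rightarrow> 'a \<Rightarrow> 'a \<Rightarrow> nat" where
  "gdist Vs E x y = (LEAST m. walk Vs E m x y)"

definition connected_graph :: "'a set \<Rightarrow> ('a \<Rightarrow> 'a \<Rightarrow> bool) \<Rightarrow> bool" where
  "connected_graph Vs E \<longleftrightarrow> (\<forall>x\<in>Vs. \<forall>y\<in>Vs. \<exists>m. walk Vs E m x y)"

definition Wset :: "'a set \<Rightarrow> ('a \<Rightarrow> 'a \<Rightarrow> bool) \<Rightarrow> 'a \<Rightarrow> 'a \<Rightarrow> 'a set" where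
  "Wset Vs E x y = {w \<in> Vs. gdist Vs E w x < gdist Vs E w y}"

definition dist_balanced :: "nat \<Rightarrow> 'a set \<Rightarrow> ('a \<Rightarrow> 'a \<Rightarrow> bool) \<Rightarrow> bool" where
  "dist_balanced l Vs E \<longleftrightarrow>
     (\<forall>x\<in>Vs. \<forall>y\<in>Vs. gdist Vs E x y = l \<longrightarrow> card (Wset Vs E x y) = card (Wset Vs E y x))"

end

theory Submission
  imports Defs
begin

text \<open>
  For adjacent x and y every vertex w satisfies d(w,y) - d(w,x) \<in> {-1, 0, 1}, so
  |W_xy| - |W_yx| is the sum of d(w,y) - d(w,x) over all w. Take x = u_0, y = v_0 in GP(n,3).
  The distances are computed in the infinite cover on vertices u_t, v_t (t \<in> \<int>) with edges
  u_t u_{t+1}, v_t v_{t+3}, u_t v_t, where they are given by explicit formulas; the distance to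
  u_i or v_i in GP(n,3) is the minimum over the lifts t \<equiv> i (mod n). Since d(u_i,v_0) = d(v_i,u_0),
  the sum telescopes to the sum over i of d(v_i,v_0) - d(u_i,u_0). These terms are at most 2,
  at most 0 unless i \<in> {1, 2, n-2, n-1}, and at most -2 for i \<in> {3, 6, 9, n-6, n-3}, so the
  sum is negative once n > 16.
\<close>

section \<open>Distances certified by potentials\<close>

lemma walk_length_ge_potential:
  assumes "\<phi> x = 0" and "\<And>w z. E w z \<Longrightarrow> \<phi> w \<le> \<phi> z + 1" and "walk Vs E m w x"
  shows "\<phi> w \<le> m"
  using assms(3)
proof (induction m arbitrary: w)
  case 0
  then show ?case using assms(1) by simp
next
  case (Suc m)
  then obtain z where "E w z" "walk Vs E m z x" by auto
  with Suc.IH assms(2)[of w z] show ?case by fastforce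
qed

lemma walk_along_descent:
  assumes "x \<in> Vs" and "\<forall>w\<in>Vs. \<phi> w = 0 \<longrightarrow> w = x"
    and "\<forall>w\<in>Vs. 0 < \<phi> w \<longrightarrow> (\<exists>z\<in>Vs. E w z \<and> \<phi> z + 1 = \<phi> w)"
  shows "w \<in> Vs \<Longrightarrow> \<phi> w = m \<Longrightarrow> walk Vs E m w x"
proof (induction m arbitrary: w)
  case 0
  then show ?case using assms(2) by auto
next
  case (Suc m)
  then obtain z where "z \<in> Vs" "E w z" "\<phi> z = m" using assms(3) by fastforce
  with Suc.IH show ?case by auto
qed

lemma gdist_eq_potential:
  assumes "x \<in> Vs" and "\<phi> x = 0" and "\<forall>w\<in>Vs. \<phi> w = 0 \<longrightarrow> w = x"
    and "\<And>w z. E w z \<Longrightarrow> \<phi> w \<le> \<phi> z + 1"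
    and "\<forall>w\<in>Vs. 0 < \<phi> w \<longrightarrow> (\<exists>z\<in>Vs. E w z \<and> \<phi> z + 1 = \<phi> w)"
    and "w \<in> Vs"
  shows "gdist Vs E w x = \<phi> w"
  unfolding gdist_def
proof (rule Least_equality)
  show "walk Vs E (\<phi> w) w x" using walk_along_descent[OF assms(1,3,5,6)] by simp
  show "\<phi> w \<le> m" if "walk Vs E m w x" for m
    using walk_length_ge_potential[of \<phi> x E, OF assms(2,4) that] .
qed

lemma card_Wset_diff_eq_sum:
  assumes "finite Vs"
    and close: "\<And>w. w \<in> Vs \<Longrightarrow>
      gdist Vs E w x \<le> gdist Vs E w y + 1 \<and> gdist Vs E w y \<le> gdist Vs E w x + 1"
  shows "int (card (Wset Vs E x y)) - int (card (Wset Vs E y x))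
    = (\<Sum>w\<in>Vs. int (gdist Vs E w y) - int (gdist Vs E w x))"
proof -
  let ?d = "\<lambda>w z. gdist Vs E w z"
  have "(\<Sum>w\<in>Vs. int (?d w y) - int (?d w x))
      = (\<Sum>w\<in>Vs. of_bool (?d w x < ?d w y) - of_bool (?d w y < ?d w x))"
    using close by (intro sum.cong) fastforce+
  also have "\<dots> = int (card (Wset Vs E x y)) - int (card (Wset Vs E y x))"
    using assms(1) by (simp add: sum_subtractf Wset_def Int_def)
  finally show ?thesis by simp
qed

section \<open>Minima over lifts\<close>

definition lift_min :: "nat \<Rightarrow> (int \<Rightarrow> nat) \<Rightarrow> nat \<Rightarrow> nat" where
  "lift_min n F i = (LEAST m. \<exists>t. t mod int n = int i mod int n \<and> F t = m)"

lemma lift_min_le: "t mod int n = int i mod int n \<Longrightarrow> lift_min n F i \<le> F t"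
  unfolding lift_min_def by (rule Least_le) blast

lemma lift_min_attained:
  obtains t where "t mod int n = int i mod int n" and "F t = lift_min n F i"
proof -
  have "\<exists>m t. t mod int n = int i mod int n \<and> F t = m" by blast
  from LeastI_ex[OF this] show ?thesis using that unfolding lift_min_def by blast
qed

lemma lift_min_le_shifted_lift:
  assumes "t mod int n = int i mod int n" and "int j mod int n = (int i + d) mod int n"
  shows "lift_min n F j \<le> F (t + d)"
proof (rule lift_min_le)
  show "(t + d) mod int n = int j mod int n"
    using mod_add_cong[OF assms(1), of d d] assms(2) by simp
qed

lemma lift_min_shift_mono:
  assumes "\<And>t. F t \<le> G (t + d) + c" and "(int i + d) mod int n = int j mod int n"
  shows "lift_min n F i \<le> lift_min n G j + c"
proof -
  obtain t where t: "t mod int n = int j mod int n" "G t = lift_min n G j"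
    by (rule lift_min_attained)
  have "int i mod int n = (int j + - d) mod int n"
    using mod_add_cong[OF assms(2)[symmetric], of "- d" "- d"] by simp
  then have "lift_min n F i \<le> F (t + - d)" by (rule lift_min_le_shifted_lift[OF t(1)])
  also have "\<dots> \<le> G t + c" using assms(1)[of "t - d"] by simp
  finally show ?thesis using t(2) by simp
qed

lemma lift_min_pos: "(\<And>t. 0 < F t) \<Longrightarrow> 0 < lift_min n F i"
  by (metis lift_min_attained)

lemma lift_min_eq_0_iff:
  assumes "\<And>t. F t = 0 \<longleftrightarrow> t = 0" and "i < n"
  shows "lift_min n F i = 0 \<longleftrightarrow> i = 0"
proof
  assume "lift_min n F i = 0"
  then obtain t where "t mod int n = int i mod int n" "t = 0"
    using assms(1) by (metis lift_min_attained)
  then show "i = 0" using assms(2) by simp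
next
  assume "i = 0"
  then show "lift_min n F i = 0" using lift_min_le[of 0 n i F] assms(1)[of 0] by simp
qed

lemma abs_ge_min_of_mod_eq:
  assumes "t mod int n = int i mod int n" and "i < n"
  shows "min (int i) (int n - int i) \<le> \<bar>t\<bar>"
proof -
  obtain q where q: "t - int i = int n * q"
    using assms(1) by (metis dvd_def mod_eq_dvd_iff)
  consider "q = 0" | "1 \<le> q" | "q \<le> -1" by linarith
  then show ?thesis
  proof cases
    case 2
    then have "int n * 1 \<le> int n * q" by (intro mult_left_mono) auto
    then show ?thesis using q by simp
  next
    case 3
    then have "int n * q \<le> int n * (-1)" by (intro mult_left_mono) auto
    then show ?thesis using q assms(2) by simp
  qed (use q in simp)
qed

section \<open>Generalized Petersen graphs and their infinite covers\<close>

lemma gp_verts_iff [simp]: "U i \<in> gp_verts n \<longleftrightarrow> i < n" "V i \<in> gp_verts n \<longleftrightarrow> i < n"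
  by (auto simp: gp_verts_def)

lemma gp_adj_in_verts: "gp_adj n k x y \<Longrightarrow> y \<in> gp_verts n"
  unfolding gp_adj_def by blast

lemma gp_adj_sym: "gp_adj n k x y \<Longrightarrow> gp_adj n k y x"
  unfolding gp_adj_def by (simp only: insert_commute[of y x])

lemma gp_adj_U_U: "i < n \<Longrightarrow> gp_adj n k (U i) (U ((i + 1) mod n))"
  unfolding gp_adj_def by auto

lemma gp_adj_V_V: "i < n \<Longrightarrow> gp_adj n k (V i) (V ((i + k) mod n))"
  unfolding gp_adj_def by auto

lemma gp_adj_U_V: "i < n \<Longrightarrow> gp_adj n k (U i) (V i)"
  unfolding gp_adj_def by auto

lemma sum_gp_verts: "(\<Sum>w\<in>gp_verts n. g w) = (\<Sum>i<n. g (U i)) + (\<Sum>i<n. g (V i))"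
proof -
  have "(\<Sum>w\<in>gp_verts n. g w) = (\<Sum>w\<in>U ` {..<n}. g w) + (\<Sum>w\<in>V ` {..<n}. g w)"
    unfolding gp_verts_def by (rule sum.union_disjoint) auto
  also have "\<dots> = (\<Sum>i<n. g (U i)) + (\<Sum>i<n. g (V i))"
    by (simp add: sum.reindex inj_on_def)
  finally show ?thesis .
qed

lemma int_mod_add_mod: "int ((i + k) mod n) mod int n = (int i + int k) mod int n"
  by (simp add: zmod_int)

lemma int_mod_sub_mod:
  assumes "k \<le> n"
  shows "int ((i + n - k) mod n) mod int n = (int i + - int k) mod int n"
proof -
  have "int (i + n - k) = (int i + - int k) + int n" using assms by simp
  then show ?thesis by (simp add: zmod_int)
qed

lemma mod_sub_add_mod:
  fixes i k n :: nat
  assumes "k \<le> n" and "i < n"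
  shows "((i + n - k) mod n + k) mod n = i"
proof -
  have "((i + n - k) mod n + k) mod n = (i + n - k + k) mod n" by (rule mod_add_left_eq)
  also have "i + n - k + k = i + n" using assms(1) by simp
  finally show ?thesis using assms(2) by simp
qed

lemma minus_int_mod_eq: "k \<le> n \<Longrightarrow> (- int k) mod int n = int (n - k) mod int n"
  by (simp add: mod_eq_dvd_iff of_nat_diff)

text \<open>
  FU t and FV t stand for the distances from a fixed root to u_t and v_t in the infinite cover
  of GP(n,k). The two conditions below are what make the minimum over lifts the distance to the
  root in GP(n,k) itself.
\<close>

definition cover_lipschitz :: "nat \<Rightarrow> (int \<Rightarrow> nat) \<Rightarrow> (int \<Rightarrow> nat) \<Rightarrow> bool" where
  "cover_lipschitz k FU FV \<longleftrightarrow> (\<forall>t.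
     \<bar>int (FU (t + 1)) - int (FU t)\<bar> \<le> 1 \<and>
     \<bar>int (FV (t + int k)) - int (FV t)\<bar> \<le> 1 \<and>
     \<bar>int (FU t) - int (FV t)\<bar> \<le> 1)"

definition cover_descending :: "nat \<Rightarrow> (int \<Rightarrow> nat) \<Rightarrow> (int \<Rightarrow> nat) \<Rightarrow> bool" where
  "cover_descending k FU FV \<longleftrightarrow> (\<forall>t.
     (0 < FU t \<longrightarrow> FU (t + 1) + 1 = FU t \<or> FU (t - 1) + 1 = FU t \<or> FV t + 1 = FU t) \<and>
     (0 < FV t \<longrightarrow> FV (t + int k) + 1 = FV t \<or> FV (t - int k) + 1 = FV t \<or> FU t + 1 = FV t))"

definition gp_potential :: "nat \<Rightarrow> (int \<Rightarrow> nat) \<Rightarrow> (int \<Rightarrow> nat) \<Rightarrow> gp_vertex \<Rightarrow> nat" where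
  "gp_potential n FU FV w = (case w of U i \<Rightarrow> lift_min n FU i | V i \<Rightarrow> lift_min n FV i)"

lemma cover_lipschitzD:
  assumes "cover_lipschitz k FU FV"
  shows "FU t \<le> FU (t + 1) + 1" "FU t \<le> FU (t + - 1) + 1"
    and "FV t \<le> FV (t + int k) + 1" "FV t \<le> FV (t + - int k) + 1"
    and "FU t \<le> FV (t + 0) + 1" "FV t \<le> FU (t + 0) + 1"
proof -
  have l: "\<bar>int (FU (s + 1)) - int (FU s)\<bar> \<le> 1" "\<bar>int (FV (s + int k)) - int (FV s)\<bar> \<le> 1"
    "\<bar>int (FU s) - int (FV s)\<bar> \<le> 1" for s
    using assms unfolding cover_lipschitz_def by blast+
  from l(1)[of t] show "FU t \<le> FU (t + 1) + 1" by (simp add: abs_le_iff)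
  from l(1)[of "t - 1"] show "FU t \<le> FU (t + - 1) + 1" by (simp add: abs_le_iff)
  from l(2)[of t] show "FV t \<le> FV (t + int k) + 1" by (simp add: abs_le_iff)
  from l(2)[of "t - int k"] show "FV t \<le> FV (t + - int k) + 1" by (simp add: abs_le_iff)
  from l(3)[of t] show "FU t \<le> FV (t + 0) + 1" "FV t \<le> FU (t + 0) + 1" by (simp_all add: abs_le_iff)
qed

lemma lift_min_close:
  assumes "cover_lipschitz k FU FV"
  shows "lift_min n FU i \<le> lift_min n FV i + 1" "lift_min n FV i \<le> lift_min n FU i + 1"
  by (rule lift_min_shift_mono[where d=0]; use cover_lipschitzD(5,6)[OF assms] in simp)+

lemma gp_potential_lipschitz:
  assumes lip: "cover_lipschitz k FU FV" and adj: "gp_adj n k w z"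
  shows "gp_potential n FU FV w \<le> gp_potential n FU FV z + 1"
proof -
  from adj obtain i where i: "i < n" and edge: "{w, z} = {U i, U ((i + 1) mod n)} \<or>
      {w, z} = {V i, V ((i + k) mod n)} \<or> {w, z} = {U i, V i}"
    unfolding gp_adj_def by blast
  have pred1: "(int ((i + 1) mod n) + - 1) mod int n = int i mod int n"
    and predk: "(int ((i + k) mod n) + - int k) mod int n = int i mod int n"
    by (simp_all add: zmod_int mod_add_left_eq mod_diff_left_eq)
  have "lift_min n FU i \<le> lift_min n FU ((i + 1) mod n) + 1"
    by (rule lift_min_shift_mono[where d=1]) (use cover_lipschitzD(1)[OF lip] int_mod_add_mod[of i 1 n] in auto)
  moreover have "lift_min n FU ((i + 1) mod n) \<le> lift_min n FU i + 1"
    by (rule lift_min_shift_mono[where d="- 1"]) (use cover_lipschitzD(2)[OF lip] pred1 in auto)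
  moreover have "lift_min n FV i \<le> lift_min n FV ((i + k) mod n) + 1"
    by (rule lift_min_shift_mono[where d="int k"]) (use cover_lipschitzD(3)[OF lip] int_mod_add_mod[of i k n] in auto)
  moreover have "lift_min n FV ((i + k) mod n) \<le> lift_min n FV i + 1"
    by (rule lift_min_shift_mono[where d="- int k"]) (use cover_lipschitzD(4)[OF lip] predk in auto)
  ultimately show ?thesis
    using edge lift_min_close[OF lip] by (auto simp: doubleton_eq_iff gp_potential_def)
qed

lemma cover_descendingD:
  assumes "cover_descending k FU FV"
  shows "0 < FU t \<Longrightarrow> FU (t + 1) + 1 = FU t \<or> FU (t + - 1) + 1 = FU t \<or> FV t + 1 = FU t"
    and "0 < FV t \<Longrightarrow> FV (t + int k) + 1 = FV t \<or> FV (t + - int k) + 1 = FV t \<or> FU t + 1 = FV t"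
  using assms unfolding cover_descending_def by auto

lemma gp_potential_descent_step:
  assumes "cover_lipschitz k FU FV" and "gp_adj n k w z"
    and "gp_potential n FU FV z \<le> c" and "c + 1 = gp_potential n FU FV w"
  shows "\<exists>z\<in>gp_verts n. gp_adj n k w z \<and> gp_potential n FU FV z + 1 = gp_potential n FU FV w"
proof -
  have "gp_potential n FU FV z + 1 = gp_potential n FU FV w"
    using assms gp_potential_lipschitz[OF assms(1,2)] by linarith
  with assms(2) gp_adj_in_verts show ?thesis by blast
qed

lemma gp_potential_descent_U:
  assumes lip: "cover_lipschitz k FU FV" and desc: "cover_descending k FU FV"
    and i: "i < n" and pos: "0 < gp_potential n FU FV (U i)"
  shows "\<exists>z\<in>gp_verts n. gp_adj n k (U i) z \<and> gp_potential n FU FV z + 1 = gp_potential n FU FV (U i)"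
proof -
  let ?p = "gp_potential n FU FV"
  obtain t where t: "t mod int n = int i mod int n" "FU t = ?p (U i)"
    unfolding gp_potential_def by (auto intro: lift_min_attained)
  from pos t(2) have "0 < FU t" by simp
  with cover_descendingD(1)[OF desc]
  consider "FU (t + 1) + 1 = FU t" | "FU (t + - 1) + 1 = FU t" | "FV t + 1 = FU t" by blast
  then show ?thesis
  proof cases
    case 1
    have "?p (U ((i + 1) mod n)) \<le> FU (t + 1)"
      using lift_min_le_shifted_lift[OF t(1) int_mod_add_mod[of i 1 n]] by (simp add: gp_potential_def)
    with 1 t(2) gp_adj_U_U[OF i] show ?thesis by (intro gp_potential_descent_step[OF lip]) auto
  next
    case 2
    let ?j = "(i + n - 1) mod n"
    have "?p (U ?j) \<le> FU (t + - 1)"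
      using lift_min_le_shifted_lift[OF t(1) int_mod_sub_mod[of 1 n i]] i by (simp add: gp_potential_def)
    moreover have "gp_adj n k (U i) (U ?j)"
      using gp_adj_sym[OF gp_adj_U_U[of ?j n k]] mod_sub_add_mod[of 1 n i] i by simp
    ultimately show ?thesis using 2 t(2) by (intro gp_potential_descent_step[OF lip]) auto
  next
    case 3
    have "?p (V i) \<le> FV t" using lift_min_le[OF t(1)] by (simp add: gp_potential_def)
    with 3 t(2) gp_adj_U_V[OF i] show ?thesis by (intro gp_potential_descent_step[OF lip]) auto
  qed
qed

lemma gp_potential_descent_V:
  assumes lip: "cover_lipschitz k FU FV" and desc: "cover_descending k FU FV"
    and "k \<le> n" and i: "i < n" and pos: "0 < gp_potential n FU FV (V i)"
  shows "\<exists>z\<in>gp_verts n. gp_adj n k (V i) z \<and> gp_potential n FU FV z + 1 = gp_potential n FU FV (V i)"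
proof -
  let ?p = "gp_potential n FU FV"
  obtain t where t: "t mod int n = int i mod int n" "FV t = ?p (V i)"
    unfolding gp_potential_def by (auto intro: lift_min_attained)
  from pos t(2) have "0 < FV t" by simp
  with cover_descendingD(2)[OF desc]
  consider "FV (t + int k) + 1 = FV t" | "FV (t + - int k) + 1 = FV t" | "FU t + 1 = FV t" by blast
  then show ?thesis
  proof cases
    case 1
    have "?p (V ((i + k) mod n)) \<le> FV (t + int k)"
      using lift_min_le_shifted_lift[OF t(1) int_mod_add_mod[of i k n]] by (simp add: gp_potential_def)
    with 1 t(2) gp_adj_V_V[OF i] show ?thesis by (intro gp_potential_descent_step[OF lip]) auto
  next
    case 2
    let ?j = "(i + n - k) mod n"
    have "?p (V ?j) \<le> FV (t + - int k)"
      using lift_min_le_shifted_lift[OF t(1) int_mod_sub_mod[OF \<open>k \<le> n\<close>]] by (simp add: gp_potential_def)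
    moreover have "gp_adj n k (V i) (V ?j)"
      using gp_adj_sym[OF gp_adj_V_V[of ?j n k]] mod_sub_add_mod[OF \<open>k \<le> n\<close> i] i by simp
    ultimately show ?thesis using 2 t(2) by (intro gp_potential_descent_step[OF lip]) auto
  next
    case 3
    have "?p (U i) \<le> FU t" using lift_min_le[OF t(1)] by (simp add: gp_potential_def)
    with 3 t(2) gp_adj_sym[OF gp_adj_U_V[OF i]] show ?thesis
      by (intro gp_potential_descent_step[OF lip]) auto
  qed
qed

lemma gp_potential_descent:
  assumes "cover_lipschitz k FU FV" and "cover_descending k FU FV" and "k \<le> n"
    and "w \<in> gp_verts n" and "0 < gp_potential n FU FV w"
  shows "\<exists>z\<in>gp_verts n. gp_adj n k w z \<and> gp_potential n FU FV z + 1 = gp_potential n FU FV w"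
  using assms gp_potential_descent_U[OF assms(1,2)] gp_potential_descent_V[OF assms(1-3)]
  by (cases w) auto

lemma gdist_eq_gp_potential:
  assumes lip: "cover_lipschitz k FU FV" and desc: "cover_descending k FU FV" and "k \<le> n"
    and r: "r \<in> gp_verts n"
    and zero: "\<And>w. w \<in> gp_verts n \<Longrightarrow> gp_potential n FU FV w = 0 \<longleftrightarrow> w = r"
    and w: "w \<in> gp_verts n"
  shows "gdist (gp_verts n) (gp_adj n k) w r = gp_potential n FU FV w"
proof (rule gdist_eq_potential[OF r])
  show "gp_potential n FU FV r = 0" using zero r by simp
  show "\<forall>w\<in>gp_verts n. gp_potential n FU FV w = 0 \<longrightarrow> w = r" using zero by blast
  show "gp_potential n FU FV x \<le> gp_potential n FU FV y + 1" if "gp_adj n k x y" for x y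
    using gp_potential_lipschitz[OF lip that] .
  show "\<forall>w\<in>gp_verts n. 0 < gp_potential n FU FV w \<longrightarrow>
      (\<exists>z\<in>gp_verts n. gp_adj n k w z \<and> gp_potential n FU FV z + 1 = gp_potential n FU FV w)"
    using gp_potential_descent[OF lip desc \<open>k \<le> n\<close>] by blast
qed (rule w)

lemma gp_potential_eq_0_iff_U0:
  assumes "\<And>t. FU t = 0 \<longleftrightarrow> t = 0" and "\<And>t. 0 < FV t" and "w \<in> gp_verts n"
  shows "gp_potential n FU FV w = 0 \<longleftrightarrow> w = U 0"
  using assms lift_min_eq_0_iff[OF assms(1)] lift_min_pos[of FV n]
  by (cases w) (auto simp: gp_potential_def)

lemma gp_potential_eq_0_iff_V0:
  assumes "\<And>t. 0 < FU t" and "\<And>t. FV t = 0 \<longleftrightarrow> t = 0" and "w \<in> gp_verts n"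
  shows "gp_potential n FU FV w = 0 \<longleftrightarrow> w = V 0"
  using assms lift_min_eq_0_iff[OF assms(2)] lift_min_pos[of FU n]
  by (cases w) (auto simp: gp_potential_def)

section \<open>Distances in GP(n,3)\<close>

lemma int_mod3_cases:
  fixes m :: int
  obtains q where "m = 3 * q" | q where "m = 3 * q + 1" | q where "m = 3 * q + 2"
proof -
  have "m = 3 * (m div 3) + m mod 3" by simp
  moreover have "m mod 3 = 0 \<or> m mod 3 = 1 \<or> m mod 3 = 2" by presburger
  ultimately show ?thesis using that by (metis add.right_neutral)
qed

lemma div_mod_3_simps:
  fixes q r :: int
  shows "(3 * q + r) div 3 = q + r div 3" "(3 * q + r) mod 3 = r mod 3"
    and "(3 * q) div 3 = q" "(3 * q) mod 3 = 0"
    and "(3 * q - r) div 3 = q + (- r) div 3" "(3 * q - r) mod 3 = (- r) mod 3"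
  by presburger+

lemma nat_iff_int: "0 < a \<longleftrightarrow> 0 < int a" "a + 1 = b \<longleftrightarrow> int a + 1 = int b"
  for a b :: nat
  by presburger+

lemma abs_shift_close:
  fixes P :: "int \<Rightarrow> int" and d :: int
  assumes "0 \<le> d" and "\<And>m. 0 \<le> m \<Longrightarrow> \<bar>P (m + d) - P m\<bar> \<le> 1"
    and "\<And>m. 0 < m \<Longrightarrow> m < d \<Longrightarrow> \<bar>P (d - m) - P m\<bar> \<le> 1"
  shows "\<bar>P \<bar>t + d\<bar> - P \<bar>t\<bar>\<bar> \<le> 1"
proof -
  consider "0 \<le> t" | "t + d \<le> 0" | "0 < t + d" "t < 0" by linarith
  then show ?thesis
  proof cases
    case 1
    with assms(1) assms(2)[of t] show ?thesis by simp
  next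
    case 2
    with assms(1) assms(2)[of "- t - d"] show ?thesis by (simp add: abs_minus_commute abs_of_nonpos)
  next
    case 3
    with assms(3)[of "- t"] show ?thesis by (simp add: add.commute)
  qed
qed

lemma abs_shift_descent:
  fixes P Q :: "int \<Rightarrow> int" and d :: int
  assumes "0 < d" and "0 < P \<bar>t\<bar>"
    and "\<And>m. 0 \<le> m \<Longrightarrow> 0 < P m \<Longrightarrow>
      P (m + d) + 1 = P m \<or> (d \<le> m \<and> P (m - d) + 1 = P m) \<or> Q m + 1 = P m"
  shows "P \<bar>t + d\<bar> + 1 = P \<bar>t\<bar> \<or> P \<bar>t - d\<bar> + 1 = P \<bar>t\<bar> \<or> Q \<bar>t\<bar> + 1 = P \<bar>t\<bar>"
proof (cases "0 \<le> t")
  case True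
  with assms(1) assms(3)[of t] assms(2) show ?thesis by (auto simp: abs_of_nonneg)
next
  case False
  with assms(1) assms(3)[of "- t"] assms(2) show ?thesis by (auto simp: abs_of_neg)
qed

lemma int_between_0_3: "0 < m \<Longrightarrow> m < 3 \<Longrightarrow> m = 1 \<or> m = (2::int)"
  by linarith

text \<open>
  Distances in the infinite cover of GP(n,3), for m \<ge> 0: ladder_uu m = d(u_0,u_m),
  ladder_uv m = d(u_0,v_m) = d(v_0,u_m) and ladder_vv m = d(v_0,v_m).
\<close>

definition ladder_uu :: "int \<Rightarrow> int" where
  "ladder_uu m = (if m < 3 then m else m div 3 + 2 + m mod 3)"

definition ladder_uv :: "int \<Rightarrow> int" where
  "ladder_uv m = m div 3 + 1 + m mod 3"

definition ladder_vv :: "int \<Rightarrow> int" where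
  "ladder_vv m = (if m mod 3 = 0 then m div 3 else m div 3 + 2 + m mod 3)"

lemmas ladder_defs = ladder_uu_def ladder_uv_def ladder_vv_def

lemma ladder_nonneg:
  assumes "0 \<le> m"
  shows "0 \<le> ladder_uu m" "0 < ladder_uv m" "0 \<le> ladder_vv m"
  using assms by (cases m rule: int_mod3_cases; simp add: ladder_defs div_mod_3_simps)+

lemma ladder_eq_0_iff:
  assumes "0 \<le> m"
  shows "ladder_uu m = 0 \<longleftrightarrow> m = 0" "ladder_vv m = 0 \<longleftrightarrow> m = 0"
  using assms by (cases m rule: int_mod3_cases; simp add: ladder_defs div_mod_3_simps; presburger)+

lemma ladder_steps:
  assumes "0 \<le> m"
  shows "\<bar>ladder_uu (m + 1) - ladder_uu m\<bar> \<le> 1" "\<bar>ladder_uv (m + 1) - ladder_uv m\<bar> \<le> 1"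
    "\<bar>ladder_uv (m + 3) - ladder_uv m\<bar> \<le> 1" "\<bar>ladder_vv (m + 3) - ladder_vv m\<bar> \<le> 1"
    "\<bar>ladder_uu m - ladder_uv m\<bar> \<le> 1" "\<bar>ladder_uv m - ladder_vv m\<bar> \<le> 1"
  using assms by (cases m rule: int_mod3_cases; simp add: ladder_defs div_mod_3_simps)+

lemma ladder_vv_le_uu:
  assumes "0 \<le> m"
  shows "ladder_vv m \<le> ladder_uu m + 2" "3 \<le> m \<Longrightarrow> ladder_vv m \<le> ladder_uu m"
    and "3 \<le> m \<Longrightarrow> (m + 1) div 3 + 2 \<le> ladder_uu m"
  using assms by (cases m rule: int_mod3_cases; simp add: ladder_defs div_mod_3_simps)+

lemma ladder_descents:
  assumes "0 \<le> m"
  shows "0 < ladder_uu m \<Longrightarrow> ladder_uu (m + 1) + 1 = ladder_uu m \<or>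
      (1 \<le> m \<and> ladder_uu (m - 1) + 1 = ladder_uu m) \<or> ladder_uv m + 1 = ladder_uu m"
    "0 < ladder_uv m \<Longrightarrow> ladder_uv (m + 1) + 1 = ladder_uv m \<or>
      (1 \<le> m \<and> ladder_uv (m - 1) + 1 = ladder_uv m) \<or> ladder_vv m + 1 = ladder_uv m"
    "0 < ladder_uv m \<Longrightarrow> ladder_uv (m + 3) + 1 = ladder_uv m \<or>
      (3 \<le> m \<and> ladder_uv (m - 3) + 1 = ladder_uv m) \<or> ladder_uu m + 1 = ladder_uv m"
    "0 < ladder_vv m \<Longrightarrow> ladder_vv (m + 3) + 1 = ladder_vv m \<or>
      (3 \<le> m \<and> ladder_vv (m - 3) + 1 = ladder_vv m) \<or> ladder_uv m + 1 = ladder_vv m"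
  using assms by (cases m rule: int_mod3_cases; auto simp add: ladder_defs div_mod_3_simps split: if_splits)+

definition cover_uu :: "int \<Rightarrow> nat" where
  "cover_uu t = nat (ladder_uu \<bar>t\<bar>)"

definition cover_uv :: "int \<Rightarrow> nat" where
  "cover_uv t = nat (ladder_uv \<bar>t\<bar>)"

definition cover_vv :: "int \<Rightarrow> nat" where
  "cover_vv t = nat (ladder_vv \<bar>t\<bar>)"

lemma int_cover:
  "int (cover_uu t) = ladder_uu \<bar>t\<bar>" "int (cover_uv t) = ladder_uv \<bar>t\<bar>" "int (cover_vv t) = ladder_vv \<bar>t\<bar>"
  using ladder_nonneg[of "\<bar>t\<bar>"] by (simp_all add: cover_uu_def cover_uv_def cover_vv_def)

lemma cover_lipschitz_uu_uv: "cover_lipschitz 3 cover_uu cover_uv"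
  unfolding cover_lipschitz_def int_cover of_nat_numeral
proof (intro allI conjI)
  fix t :: int
  show "\<bar>ladder_uu \<bar>t + 1\<bar> - ladder_uu \<bar>t\<bar>\<bar> \<le> 1"
    by (rule abs_shift_close) (use ladder_steps(1) in auto)
  show "\<bar>ladder_uv \<bar>t + 3\<bar> - ladder_uv \<bar>t\<bar>\<bar> \<le> 1"
    by (rule abs_shift_close) (use ladder_steps(3) in \<open>auto dest!: int_between_0_3 simp: ladder_uv_def\<close>)
  show "\<bar>ladder_uu \<bar>t\<bar> - ladder_uv \<bar>t\<bar>\<bar> \<le> 1"
    using ladder_steps(5) by simp
qed

lemma cover_lipschitz_uv_vv: "cover_lipschitz 3 cover_uv cover_vv"
  unfolding cover_lipschitz_def int_cover of_nat_numeral
proof (intro allI conjI)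
  fix t :: int
  show "\<bar>ladder_uv \<bar>t + 1\<bar> - ladder_uv \<bar>t\<bar>\<bar> \<le> 1"
    by (rule abs_shift_close) (use ladder_steps(2) in auto)
  show "\<bar>ladder_vv \<bar>t + 3\<bar> - ladder_vv \<bar>t\<bar>\<bar> \<le> 1"
    by (rule abs_shift_close) (use ladder_steps(4) in \<open>auto dest!: int_between_0_3 simp: ladder_vv_def\<close>)
  show "\<bar>ladder_uv \<bar>t\<bar> - ladder_vv \<bar>t\<bar>\<bar> \<le> 1"
    using ladder_steps(6) by simp
qed

lemma cover_descending_uu_uv: "cover_descending 3 cover_uu cover_uv"
  unfolding cover_descending_def nat_iff_int int_cover of_nat_numeral
proof (intro allI conjI impI)
  fix t :: int
  show "ladder_uu \<bar>t + 1\<bar> + 1 = ladder_uu \<bar>t\<bar> \<or> ladder_uu \<bar>t - 1\<bar> + 1 = ladder_uu \<bar>t\<bar> \<or>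
      ladder_uv \<bar>t\<bar> + 1 = ladder_uu \<bar>t\<bar>" if "0 < ladder_uu \<bar>t\<bar>"
    by (rule abs_shift_descent[where P=ladder_uu and Q=ladder_uv, OF _ that]) (use ladder_descents(1) in auto)
  show "ladder_uv \<bar>t + 3\<bar> + 1 = ladder_uv \<bar>t\<bar> \<or> ladder_uv \<bar>t - 3\<bar> + 1 = ladder_uv \<bar>t\<bar> \<or>
      ladder_uu \<bar>t\<bar> + 1 = ladder_uv \<bar>t\<bar>" if "0 < ladder_uv \<bar>t\<bar>"
    by (rule abs_shift_descent[where P=ladder_uv and Q=ladder_uu, OF _ that]) (use ladder_descents(3) in auto)
qed

lemma cover_descending_uv_vv: "cover_descending 3 cover_uv cover_vv"
  unfolding cover_descending_def nat_iff_int int_cover of_nat_numeral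
proof (intro allI conjI impI)
  fix t :: int
  show "ladder_uv \<bar>t + 1\<bar> + 1 = ladder_uv \<bar>t\<bar> \<or> ladder_uv \<bar>t - 1\<bar> + 1 = ladder_uv \<bar>t\<bar> \<or>
      ladder_vv \<bar>t\<bar> + 1 = ladder_uv \<bar>t\<bar>" if "0 < ladder_uv \<bar>t\<bar>"
    by (rule abs_shift_descent[where P=ladder_uv and Q=ladder_vv, OF _ that]) (use ladder_descents(2) in auto)
  show "ladder_vv \<bar>t + 3\<bar> + 1 = ladder_vv \<bar>t\<bar> \<or> ladder_vv \<bar>t - 3\<bar> + 1 = ladder_vv \<bar>t\<bar> \<or>
      ladder_uv \<bar>t\<bar> + 1 = ladder_vv \<bar>t\<bar>" if "0 < ladder_vv \<bar>t\<bar>"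
    by (rule abs_shift_descent[where P=ladder_vv and Q=ladder_uv, OF _ that]) (use ladder_descents(4) in auto)
qed

lemma cover_zeros: "cover_uu t = 0 \<longleftrightarrow> t = 0" "cover_vv t = 0 \<longleftrightarrow> t = 0" "0 < cover_uv t"
  using ladder_eq_0_iff[of "\<bar>t\<bar>"] ladder_nonneg[of "\<bar>t\<bar>"]
  by (auto simp: cover_uu_def cover_uv_def cover_vv_def)

lemma cover_vv_le_uu:
  shows "cover_vv t \<le> cover_uu t + 2" and "3 \<le> \<bar>t\<bar> \<Longrightarrow> cover_vv t \<le> cover_uu t"
    and "3 \<le> \<bar>t\<bar> \<Longrightarrow> (\<bar>t\<bar> + 1) div 3 + 2 \<le> int (cover_uu t)"
  using ladder_vv_le_uu[of "\<bar>t\<bar>"] int_cover[of t] by linarith+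

lemma gdist_gp3_to_U0:
  assumes "3 \<le> n" and "w \<in> gp_verts n"
  shows "gdist (gp_verts n) (gp_adj n 3) w (U 0) = gp_potential n cover_uu cover_uv w"
  by (rule gdist_eq_gp_potential[OF cover_lipschitz_uu_uv cover_descending_uu_uv assms(1) _ _ assms(2)])
    (use assms gp_potential_eq_0_iff_U0[OF cover_zeros(1) cover_zeros(3)] in auto)

lemma gdist_gp3_to_V0:
  assumes "3 \<le> n" and "w \<in> gp_verts n"
  shows "gdist (gp_verts n) (gp_adj n 3) w (V 0) = gp_potential n cover_uv cover_vv w"
  by (rule gdist_eq_gp_potential[OF cover_lipschitz_uv_vv cover_descending_uv_vv assms(1) _ _ assms(2)])
    (use assms gp_potential_eq_0_iff_V0[OF cover_zeros(3) cover_zeros(2)] in auto)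

lemma gdist_gp3_U0_V0:
  assumes "3 \<le> n"
  shows "gdist (gp_verts n) (gp_adj n 3) (U 0) (V 0) = 1"
proof -
  have "lift_min n cover_uv 0 \<le> cover_uv 0" by (rule lift_min_le) simp
  moreover have "cover_uv 0 = 1" by (simp add: cover_uv_def ladder_uv_def)
  ultimately show ?thesis
    using gdist_gp3_to_V0[OF assms, of "U 0"] lift_min_pos[of cover_uv n 0] cover_zeros(3) assms
    by (simp add: gp_potential_def)
qed

lemma gdist_gp3_to_U0_V0_close:
  assumes "3 \<le> n" and "w \<in> gp_verts n"
  shows "gdist (gp_verts n) (gp_adj n 3) w (U 0) \<le> gdist (gp_verts n) (gp_adj n 3) w (V 0) + 1 \<and>
    gdist (gp_verts n) (gp_adj n 3) w (V 0) \<le> gdist (gp_verts n) (gp_adj n 3) w (U 0) + 1"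
  unfolding gdist_gp3_to_U0[OF assms] gdist_gp3_to_V0[OF assms]
  using lift_min_close[OF cover_lipschitz_uu_uv] lift_min_close[OF cover_lipschitz_uv_vv]
  by (cases w) (simp_all add: gp_potential_def)

lemma sum_gdist_gp3_V0_minus_U0:
  assumes "3 \<le> n"
  shows "(\<Sum>w\<in>gp_verts n. int (gdist (gp_verts n) (gp_adj n 3) w (V 0))
      - int (gdist (gp_verts n) (gp_adj n 3) w (U 0)))
    = (\<Sum>i<n. int (lift_min n cover_vv i) - int (lift_min n cover_uu i))"
    (is "?lhs = _")
proof -
  have "?lhs = (\<Sum>i<n. int (lift_min n cover_uv i) - int (lift_min n cover_uu i))
        + (\<Sum>i<n. int (lift_min n cover_vv i) - int (lift_min n cover_uv i))"
    unfolding sum_gp_verts using gdist_gp3_to_U0[OF assms] gdist_gp3_to_V0[OF assms]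
    by (simp add: gp_potential_def)
  also have "\<dots> = (\<Sum>i<n. int (lift_min n cover_vv i) - int (lift_min n cover_uu i))"
    by (simp add: sum.distrib[symmetric])
  finally show ?thesis .
qed

lemma lift_min_vv_le_uu_add_2: "lift_min n cover_vv i \<le> lift_min n cover_uu i + 2"
  by (rule lift_min_shift_mono[where d=0]) (use cover_vv_le_uu(1) in simp_all)

lemma lift_min_vv_le_uu:
  assumes "3 \<le> i" and "i + 3 \<le> n"
  shows "lift_min n cover_vv i \<le> lift_min n cover_uu i"
proof -
  obtain t where t: "t mod int n = int i mod int n" "cover_uu t = lift_min n cover_uu i"
    by (rule lift_min_attained)
  have "3 \<le> \<bar>t\<bar>" using abs_ge_min_of_mod_eq[OF t(1)] assms by linarith
  then show ?thesis using lift_min_le[OF t(1), of cover_vv] cover_vv_le_uu(2)[of t] t(2) by simp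
qed

lemma lift_min_vv_add_2_le_uu:
  assumes s: "s mod int n = int i mod int n" and "i < n"
    and far: "3 \<le> min (int i) (int n - int i)"
    and small: "int (cover_vv s) \<le> (min (int i) (int n - int i) + 1) div 3"
  shows "lift_min n cover_vv i + 2 \<le> lift_min n cover_uu i"
proof -
  obtain t where t: "t mod int n = int i mod int n" "cover_uu t = lift_min n cover_uu i"
    by (rule lift_min_attained)
  have "min (int i) (int n - int i) \<le> \<bar>t\<bar>" by (rule abs_ge_min_of_mod_eq[OF t(1) \<open>i < n\<close>])
  then have "(min (int i) (int n - int i) + 1) div 3 \<le> (\<bar>t\<bar> + 1) div 3" by (intro zdiv_mono1) auto
  moreover have "(\<bar>t\<bar> + 1) div 3 + 2 \<le> int (cover_uu t)"
    using far \<open>min (int i) (int n - int i) \<le> \<bar>t\<bar>\<close> by (intro cover_vv_le_uu(3)) linarith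
  moreover have "lift_min n cover_vv i \<le> cover_vv s" by (rule lift_min_le[OF s])
  ultimately show ?thesis using small t(2) by linarith
qed

lemma sum_lift_min_vv_minus_uu_neg:
  assumes "16 < n"
  shows "(\<Sum>i<n. int (lift_min n cover_vv i) - int (lift_min n cover_uu i)) < 0"
proof -
  define \<delta> where "\<delta> i = int (lift_min n cover_vv i) - int (lift_min n cover_uu i)" for i
  let ?S = "{0, 1, 2, 3, 6, 9, n - 6, n - 3, n - 2, n - 1}"
  have "?S \<subseteq> {..<n}" using assms by auto
  then have split: "(\<Sum>i<n. \<delta> i) = (\<Sum>i\<in>{..<n} - ?S. \<delta> i) + (\<Sum>i\<in>?S. \<delta> i)"
    by (rule sum.subset_diff) simp
  have "\<delta> i \<le> 0" if "i \<in> {..<n} - ?S" for i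
    unfolding \<delta>_def using lift_min_vv_le_uu[of i n] that assms by fastforce
  then have middle: "(\<Sum>i\<in>{..<n} - ?S. \<delta> i) \<le> 0" by (rule sum_nonpos)
  have far: "\<delta> i \<le> -2"
    if "s mod int n = int i mod int n" "i < n" "3 \<le> min (int i) (int n - int i)"
      "int (cover_vv s) \<le> (min (int i) (int n - int i) + 1) div 3" for s i
    unfolding \<delta>_def using lift_min_vv_add_2_le_uu[OF that] by linarith
  have "\<delta> 3 \<le> -2" "\<delta> 6 \<le> -2" "\<delta> (n - 3) \<le> -2" "\<delta> (n - 6) \<le> -2"
    using far[of 3 3] far[of 6 6] far[of "-3" "n - 3"] far[of "-6" "n - 6"]
      minus_int_mod_eq[of 3 n] minus_int_mod_eq[of 6 n] assms
    by (simp_all add: cover_vv_def ladder_vv_def of_nat_diff)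
  moreover have "\<delta> 9 \<le> -2"
  proof (rule far[of 9])
    have "(8 + 1) div 3 \<le> (min (int 9) (int n - int 9) + 1) div 3"
      using assms by (intro zdiv_mono1) auto
    then show "int (cover_vv 9) \<le> (min (int 9) (int n - int 9) + 1) div 3"
      by (simp add: cover_vv_def ladder_vv_def)
  qed (use assms in simp_all)
  moreover have "\<delta> 0 \<le> 0"
    unfolding \<delta>_def using lift_min_le[of 0 n 0 cover_vv] by (simp add: cover_vv_def ladder_vv_def)
  moreover have near: "\<delta> i \<le> 2" for i
    unfolding \<delta>_def using lift_min_vv_le_uu_add_2[of n i] by linarith
  moreover obtain m where "n = m + 17" using assms less_iff_Suc_add by auto
  then have "(\<Sum>i\<in>?S. \<delta> i) = \<delta> 0 + \<delta> 1 + \<delta> 2 + \<delta> 3 + \<delta> 6 + \<delta> 9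
      + \<delta> (n - 6) + \<delta> (n - 3) + \<delta> (n - 2) + \<delta> (n - 1)"
    by (simp add: ac_simps)
  ultimately have "(\<Sum>i\<in>?S. \<delta> i) \<le> -2"
    using near[of 1] near[of 2] near[of "n - 2"] near[of "n - 1"] by linarith
  with split middle show ?thesis unfolding \<delta>_def by linarith
qed

theorem proposition2p1:
  fixes n :: nat
  assumes "n > 16"
  shows "\<not> dist_balanced 1 (gp_verts n) (gp_adj n 3)"
proof
  assume balanced: "dist_balanced 1 (gp_verts n) (gp_adj n 3)"
  let ?Vs = "gp_verts n" and ?E = "gp_adj n 3"
  have n: "3 \<le> n" using assms by simp
  have "U 0 \<in> ?Vs" "V 0 \<in> ?Vs" using n by simp_all
  then have "card (Wset ?Vs ?E (U 0) (V 0)) = card (Wset ?Vs ?E (V 0) (U 0))"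
    using balanced gdist_gp3_U0_V0[OF n] unfolding dist_balanced_def by blast
  moreover have "finite ?Vs" by (simp add: gp_verts_def)
  ultimately have "(\<Sum>w\<in>?Vs. int (gdist ?Vs ?E w (V 0)) - int (gdist ?Vs ?E w (U 0))) = 0"
    using card_Wset_diff_eq_sum[of ?Vs ?E "U 0" "V 0"] gdist_gp3_to_U0_V0_close[OF n] by simp
  with sum_gdist_gp3_V0_minus_U0[OF n] sum_lift_min_vv_minus_uu_neg[OF assms] show False by simp
qed

end
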